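(* For a given state space, prior structure and signal structure, if the market with private signals gets learning, then the market with public signals also gets learning. Consequently, pairwise informativeness of the signal structure is necessary for the market with private signals to get learning.
   Context: Common setup: the value $\omega$ of an asset lies in a bounded set $\Omega\subset\mathbb{R}$; common full-support prior $\mu_0$; signals in $\mathbb{S}\subseteq\mathbb{R}$ with conditional densities $f(s\mid\omega)$, $0<f(s\mid\omega)<\infty$. At each date $t\ge1$ one agent arrives: independently, with fixed known probability $q\in(0,1)$ a noise agent who buys, sells or does not trade with probability $1/3$ each, otherwise an informative agent who observes $s_t\sim f(\cdot\mid\omega)$, i.i.d. given $\omega$. Private signal case: only actions $H_t=(a_1,\dots,a_{t-1})$ are public; market makers post $ask_t,bid_t$ with zero expected profit on a buy/sell; an informative agent buys if $E[\omega\mid s_t,H_t]>ask_t$, sells if $E[\omega\mid s_t,H_t]<bid_t$, otherwise no trade; the public belief is the posterior of $\mu_0$ given $H_t$. Public signal case: every informative agent's signal is publicly observed and the public belief is the posterior of $\mu_0$ given all observed signals. In either case the market gets learning if for every full-support prior $\mu_0$ the public belief on the true value $\omega^*$ converges to $1$ in probability (equivalently the public expectation converges to $\omega^*$). Pairwise informative: for all $\omega_1\neq\omega_2\in\Omega$ there is a positive-measure set $S\subseteq\mathbb{S}$ with $f(s\mid\omega_1)\neq f(s\mid\omega_2)$ for all $s\in S$. *)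

theory Defs
  imports "HOL-Probability.Probability"
begin

datatype act = Buy | Sell | NoTrade

text \<open>Per-date random outcome: ((is the agent a noise agent?, the noise agent's action), signal).
  All three components are drawn independently; the signal is only used by informative agents.\<close>
type_synonym outcome = "(bool \<times> act) \<times> real"

text \<open>Conditional signal distribution with density f(s|w) (written f s w) w.r.t. Lebesgue measure on S.\<close>
definition sig :: "real set \<Rightarrow> (real \<Rightarrow> real \<Rightarrow> real) \<Rightarrow> real \<Rightarrow> real measure" where
  "sig S f w = density lborel (\<lambda>s. ennreal (f s w * indicator S s))"

definition date_measure :: "real \<Rightarrow> real set \<Rightarrow> (real \<Rightarrow> real \<Rightarrow> real) \<Rightarrow> real \<Rightarrow> outcome measure" where
  "date_measure q S f w =
     measure_pmf (pair_pmf (bernoulli_pmf q) (pmf_of_set {Buy, Sell, NoTrade})) \<Otimes>\<^sub>M sig S f w"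

text \<open>Law of the whole i.i.d. sequence of date outcomes (date t+1 has index t) given true value w.\<close>
definition path_measure :: "real \<Rightarrow> real set \<Rightarrow> (real \<Rightarrow> real \<Rightarrow> real) \<Rightarrow> real \<Rightarrow> (nat \<Rightarrow> outcome) measure" where
  "path_measure q S f w = PiM UNIV (\<lambda>_::nat. date_measure q S f w)"

definition wexp :: "real pmf \<Rightarrow> (real \<Rightarrow> real) \<Rightarrow> real" where
  "wexp mu0 L = (\<integral>w. w * L w \<partial>measure_pmf mu0) / (\<integral>w. L w \<partial>measure_pmf mu0)"

definition wbel :: "real pmf \<Rightarrow> (real \<Rightarrow> real) \<Rightarrow> real \<Rightarrow> real" where
  "wbel mu0 L w = pmf mu0 w * L w / (\<integral>v. L v \<partial>measure_pmf mu0)"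

definition inf_act :: "real pmf \<Rightarrow> (real \<Rightarrow> real \<Rightarrow> real) \<Rightarrow> (real \<Rightarrow> real) \<Rightarrow> real \<Rightarrow> real \<Rightarrow> real \<Rightarrow> act" where
  "inf_act mu0 f L a b s =
     (if wexp mu0 (\<lambda>w. L w * f s w) > a then Buy
      else if wexp mu0 (\<lambda>w. L w * f s w) < b then Sell else NoTrade)"

definition act_prob :: "real \<Rightarrow> real set \<Rightarrow> (real \<Rightarrow> real \<Rightarrow> real) \<Rightarrow> real pmf \<Rightarrow> (real \<Rightarrow> real)
    \<Rightarrow> real \<Rightarrow> real \<Rightarrow> act \<Rightarrow> real \<Rightarrow> real" where
  "act_prob q S f mu0 L a b c w =
     q / 3 + (1 - q) * measure (sig S f w) {s. inf_act mu0 f L a b s = c}"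

text \<open>Likelihood of a public history of actions (lists are newest-first); ask and bid are
  functions of the history.\<close>
primrec priv_lik :: "real \<Rightarrow> real set \<Rightarrow> (real \<Rightarrow> real \<Rightarrow> real) \<Rightarrow> real pmf
    \<Rightarrow> (act list \<Rightarrow> real) \<Rightarrow> (act list \<Rightarrow> real) \<Rightarrow> act list \<Rightarrow> real \<Rightarrow> real" where
  "priv_lik q S f mu0 ask bid [] = (\<lambda>w. 1)"
| "priv_lik q S f mu0 ask bid (c # h) =
     (\<lambda>w. priv_lik q S f mu0 ask bid h w *
          act_prob q S f mu0 (priv_lik q S f mu0 ask bid h) (ask h) (bid h) c w)"

definition zero_profit :: "real \<Rightarrow> real set \<Rightarrow> (real \<Rightarrow> real \<Rightarrow> real) \<Rightarrow> real pmf
    \<Rightarrow> (act list \<Rightarrow> real) \<Rightarrow> (act list \<Rightarrow> real) \<Rightarrow> bool" where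
  "zero_profit q S f mu0 ask bid \<longleftrightarrow>
     (\<forall>h. ask h = wexp mu0 (\<lambda>w. priv_lik q S f mu0 ask bid h w *
                 act_prob q S f mu0 (priv_lik q S f mu0 ask bid h) (ask h) (bid h) Buy w)
        \<and> bid h = wexp mu0 (\<lambda>w. priv_lik q S f mu0 ask bid h w *
                 act_prob q S f mu0 (priv_lik q S f mu0 ask bid h) (ask h) (bid h) Sell w))"

definition priv_action :: "real \<Rightarrow> real set \<Rightarrow> (real \<Rightarrow> real \<Rightarrow> real) \<Rightarrow> real pmf
    \<Rightarrow> (act list \<Rightarrow> real) \<Rightarrow> (act list \<Rightarrow> real) \<Rightarrow> act list \<Rightarrow> outcome \<Rightarrow> act" where
  "priv_action q S f mu0 ask bid h x =
     (if fst (fst x) then snd (fst x)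
      else inf_act mu0 f (priv_lik q S f mu0 ask bid h) (ask h) (bid h) (snd x))"

primrec priv_hist :: "real \<Rightarrow> real set \<Rightarrow> (real \<Rightarrow> real \<Rightarrow> real) \<Rightarrow> real pmf
    \<Rightarrow> (act list \<Rightarrow> real) \<Rightarrow> (act list \<Rightarrow> real) \<Rightarrow> (nat \<Rightarrow> outcome) \<Rightarrow> nat \<Rightarrow> act list" where
  "priv_hist q S f mu0 ask bid xs 0 = []"
| "priv_hist q S f mu0 ask bid xs (Suc t) =
     priv_action q S f mu0 ask bid (priv_hist q S f mu0 ask bid xs t) (xs t)
       # priv_hist q S f mu0 ask bid xs t"

definition priv_belief :: "real \<Rightarrow> real set \<Rightarrow> (real \<Rightarrow> real \<Rightarrow> real) \<Rightarrow> real pmf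
    \<Rightarrow> (act list \<Rightarrow> real) \<Rightarrow> (act list \<Rightarrow> real) \<Rightarrow> (nat \<Rightarrow> outcome) \<Rightarrow> nat \<Rightarrow> real \<Rightarrow> real" where
  "priv_belief q S f mu0 ask bid xs t w =
     wbel mu0 (priv_lik q S f mu0 ask bid (priv_hist q S f mu0 ask bid xs t)) w"

definition pub_lik :: "(real \<Rightarrow> real \<Rightarrow> real) \<Rightarrow> (nat \<Rightarrow> outcome) \<Rightarrow> nat \<Rightarrow> real \<Rightarrow> real" where
  "pub_lik f xs t w = (\<Prod>i<t. if fst (fst (xs i)) then 1 else f (snd (xs i)) w)"

definition pub_belief :: "real pmf \<Rightarrow> (real \<Rightarrow> real \<Rightarrow> real) \<Rightarrow> (nat \<Rightarrow> outcome) \<Rightarrow> nat \<Rightarrow> real \<Rightarrow> real" where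
  "pub_belief mu0 f xs t w = wbel mu0 (pub_lik f xs t) w"

definition learns :: "(real \<Rightarrow> (nat \<Rightarrow> outcome) measure) \<Rightarrow> real set
    \<Rightarrow> ((nat \<Rightarrow> outcome) \<Rightarrow> nat \<Rightarrow> real \<Rightarrow> real) \<Rightarrow> bool" where
  "learns P Om B \<longleftrightarrow>
     (\<forall>w\<in>Om. (\<forall>t. (\<lambda>xs. B xs t w) \<in> borel_measurable (P w)) \<and>
        (\<forall>e>0. (\<lambda>t. measure (P w) {xs \<in> space (P w). \<bar>B xs t w - 1\<bar> > e}) \<longlonglongrightarrow> 0))"

definition private_learning :: "real \<Rightarrow> real set \<Rightarrow> (real \<Rightarrow> real \<Rightarrow> real) \<Rightarrow> real set \<Rightarrow> bool" where
  "private_learning q S f Om \<longleftrightarrow>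
     (\<forall>mu0. set_pmf mu0 = Om \<longrightarrow>
        (\<exists>ask bid. zero_profit q S f mu0 ask bid \<and>
           learns (path_measure q S f) Om (priv_belief q S f mu0 ask bid)))"

definition public_learning :: "real \<Rightarrow> real set \<Rightarrow> (real \<Rightarrow> real \<Rightarrow> real) \<Rightarrow> real set \<Rightarrow> bool" where
  "public_learning q S f Om \<longleftrightarrow>
     (\<forall>mu0. set_pmf mu0 = Om \<longrightarrow> learns (path_measure q S f) Om (pub_belief mu0 f))"

definition pairwise_informative :: "real set \<Rightarrow> (real \<Rightarrow> real \<Rightarrow> real) \<Rightarrow> real set \<Rightarrow> bool" where
  "pairwise_informative S f Om \<longleftrightarrow>
     (\<forall>w1\<in>Om. \<forall>w2\<in>Om. w1 \<noteq> w2 \<longrightarrow>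
        (\<exists>A. A \<subseteq> S \<and> A \<in> sets lborel \<and> emeasure lborel A > 0 \<and> (\<forall>s\<in>A. f s w1 \<noteq> f s w2)))"

end

theory Submission
  imports Defs
begin

text \<open>
  Private signals: if two values \<open>w\<^sub>1 \<noteq> w\<^sub>2\<close> have the same signal density almost everywhere,
  the outcome process, hence the public history, has the same law under both values. Posterior
  beliefs on \<open>w\<^sub>1\<close> and on \<open>w\<^sub>2\<close> always sum to at most 1, so under this common law they cannot
  both converge to 1 in probability.

  Public signals: let \<open>u\<close> be the true value and \<open>v \<noteq> u\<close>. The square root \<open>\<Lambda>\<^sub>v\<close> of the
  likelihood ratio of \<open>v\<close> against \<open>u\<close> after \<open>t\<close> dates is a product of \<open>t\<close> i.i.d. factors with
  second moment 1 and mean \<open>q + (1 - q) \<rho>(u, v)\<close>, where the Bhattacharyya coefficient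
  \<open>\<rho>(u, v) = \<integral> sqrt (f(s|u) f(s|v)) ds\<close> is \<open>< 1\<close> by pairwise informativeness; hence
  \<open>E \<Lambda>\<^sub>v \<longrightarrow> 0\<close>. The posterior odds against \<open>u\<close> are \<open>\<mu>\<^sub>0(u)\<^sup>-\<^sup>1 \<Sum>\<^sub>v\<^sub>\<noteq>\<^sub>u \<mu>\<^sub>0(v) \<Lambda>\<^sub>v\<^sup>2\<close>. Since
  \<open>min 1 (\<Sum>\<^sub>v \<mu>\<^sub>0(v) X\<^sub>v) \<le> \<Sum>\<^sub>v \<mu>\<^sub>0(v) min (1/\<mu>\<^sub>0(v)) X\<^sub>v\<close> and
  \<open>E min c \<Lambda>\<^sup>2 \<le> min 1 (sqrt c \<cdot> E \<Lambda>)\<close> when \<open>E \<Lambda>\<^sup>2 \<le> 1\<close>, dominated convergence over the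
  support of the prior gives \<open>E min 1 (odds) \<longrightarrow> 0\<close>, i.e. the odds tend to 0 in probability.
\<close>

lemma ex_pmf_set_pmf_eq:
  assumes "A \<noteq> {}" "countable A"
  shows "\<exists>p. set_pmf p = A"
  using assms by (intro exI[of _ "map_pmf (from_nat_into A) (geometric_pmf (1/2))"])
    (simp add: set_pmf_geometric)

lemma wbel_add_le_1:
  fixes mu0 :: "real pmf"
  assumes L: "\<And>v. v \<in> set_pmf mu0 \<Longrightarrow> 0 \<le> L v" and int: "integrable mu0 L"
    and "w1 \<noteq> w2"
  shows "wbel mu0 L w1 + wbel mu0 L w2 \<le> 1"
proof -
  let ?LW = "\<lambda>v. L v * indicator {w1, w2} v"
  have "pmf mu0 w1 * L w1 + pmf mu0 w2 * L w2 = (\<integral>v. ?LW v \<partial>mu0)"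
    using \<open>w1 \<noteq> w2\<close> by (subst integral_measure_pmf[of "{w1, w2}"]) (auto simp: indicator_def)
  also have "\<dots> \<le> (\<integral>v. L v \<partial>mu0)"
    using L by (intro integral_mono_AE integrable_real_mult_indicator int)
      (auto simp: AE_measure_pmf_iff split: split_indicator)
  finally have "pmf mu0 w1 * L w1 + pmf mu0 w2 * L w2 \<le> (\<integral>v. L v \<partial>mu0)" .
  moreover have "0 \<le> pmf mu0 w * L w" for w
    using L[of w] by (cases "pmf mu0 w = 0") (auto simp: set_pmf_iff)
  ultimately show ?thesis
    unfolding wbel_def add_divide_distrib[symmetric] divide_le_eq_1
    by (smt (verit, best))
qed

lemma (in prob_space) not_both_tendsto_1_in_probability:
  fixes X Y :: "nat \<Rightarrow> 'a \<Rightarrow> real"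
  assumes [measurable]: "\<And>t. X t \<in> borel_measurable M" "\<And>t. Y t \<in> borel_measurable M"
    and sum_le: "\<And>t x. x \<in> space M \<Longrightarrow> X t x + Y t x \<le> 1"
    and X: "\<forall>e>0. (\<lambda>t. prob {x \<in> space M. \<bar>X t x - 1\<bar> > e}) \<longlonglongrightarrow> 0"
    and Y: "\<forall>e>0. (\<lambda>t. prob {x \<in> space M. \<bar>Y t x - 1\<bar> > e}) \<longlonglongrightarrow> 0"
  shows False
proof -
  let ?A = "\<lambda>X t. {x \<in> space M. \<bar>X t x - 1\<bar> > 1/3}"
  have "1 \<le> prob (?A X t) + prob (?A Y t)" for t
  proof -
    have "space M \<subseteq> ?A X t \<union> ?A Y t"
    proof
      fix x assume "x \<in> space M"
      with sum_le[of x t] have "1/3 < \<bar>X t x - 1\<bar> \<or> 1/3 < \<bar>Y t x - 1\<bar>" by arith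
      with \<open>x \<in> space M\<close> show "x \<in> ?A X t \<union> ?A Y t" by blast
    qed
    then have "prob (space M) \<le> prob (?A X t \<union> ?A Y t)"
      by (intro finite_measure_mono) measurable
    then have "1 \<le> prob (?A X t \<union> ?A Y t)"
      by (simp add: prob_space)
    also have "\<dots> \<le> prob (?A X t) + prob (?A Y t)"
      by (intro measure_subadditive) auto
    finally show ?thesis .
  qed
  moreover have "(\<lambda>t. prob (?A X t) + prob (?A Y t)) \<longlonglongrightarrow> 0 + 0"
    by (intro tendsto_add X[rule_format] Y[rule_format]) simp_all
  ultimately have "1 \<le> (0::real) + 0"
    by (intro LIMSEQ_le_const) auto
  then show False by simp
qed

lemma nn_integral_PiM_prod_iid:
  assumes D: "prob_space D" and phi[measurable]: "phi \<in> borel_measurable D"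
  shows "(\<integral>\<^sup>+ xs. (\<Prod>i<t. phi (xs i)) \<partial>PiM UNIV (\<lambda>_. D)) = (\<integral>\<^sup>+ x. phi x \<partial>D) ^ t"
proof -
  interpret product_prob_space "\<lambda>_. D" UNIV by (rule product_prob_spaceI) (rule D)
  have "(\<integral>\<^sup>+ xs. (\<Prod>i<t. phi (xs i)) \<partial>PiM UNIV (\<lambda>_. D))
      = (\<integral>\<^sup>+ xs. (\<Prod>i<t. phi (xs i)) \<partial>distr (PiM UNIV (\<lambda>_. D)) (PiM {..<t} (\<lambda>_. D)) (\<lambda>x. restrict x {..<t}))"
    by (subst nn_integral_distr) (auto intro!: measurable_restrict_subset nn_integral_cong prod.cong)
  also have "\<dots> = (\<integral>\<^sup>+ xs. (\<Prod>i<t. phi (xs i)) \<partial>PiM {..<t} (\<lambda>_. D))"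
    by (subst distr_PiM_restrict_finite) auto
  also have "\<dots> = (\<Prod>i<t. \<integral>\<^sup>+ x. phi x \<partial>D)"
    by (rule product_nn_integral_prod) auto
  finally show ?thesis by simp
qed

lemma sqrt_mult_less_mean:
  fixes x y :: real
  assumes "0 \<le> x" "0 \<le> y" "x \<noteq> y"
  shows "sqrt (x * y) < (x + y) / 2"
proof -
  have "0 < (sqrt x - sqrt y)\<^sup>2" using assms by simp
  then show ?thesis using assms by (simp add: power2_diff real_sqrt_mult)
qed

lemma bhattacharyya_less_1:
  fixes g h :: "'a \<Rightarrow> real"
  assumes [measurable]: "g \<in> borel_measurable M" "h \<in> borel_measurable M"
    and nonneg: "\<And>x. 0 \<le> g x" "\<And>x. 0 \<le> h x"
    and g1: "(\<integral>\<^sup>+ x. g x \<partial>M) = 1" and h1: "(\<integral>\<^sup>+ x. h x \<partial>M) = 1"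
    and differ: "\<not> (AE x in M. g x = h x)"
  shows "(\<integral>\<^sup>+ x. sqrt (g x * h x) \<partial>M) < 1"
proof -
  let ?m = "\<lambda>x. ennreal ((g x + h x) / 2)"
  have "?m x = (ennreal (g x) + ennreal (h x)) / 2" for x
    using nonneg[of x] by (simp add: divide_ennreal[symmetric] ennreal_plus[symmetric] del: ennreal_plus)
  then have "(\<integral>\<^sup>+ x. ?m x \<partial>M) = ((\<integral>\<^sup>+ x. g x \<partial>M) + (\<integral>\<^sup>+ x. h x \<partial>M)) / 2"
    by (simp add: divide_ennreal_def nn_integral_multc nn_integral_add)
  also have "\<dots> = 1" using g1 h1 by (simp add: one_add_one[symmetric] del: one_add_one)
  finally have m1: "(\<integral>\<^sup>+ x. ?m x \<partial>M) = 1" .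
  have le: "AE x in M. ennreal (sqrt (g x * h x)) \<le> ?m x"
    using nonneg by (intro AE_I2 ennreal_leI arith_geo_mean_sqrt)
  have "\<not> (AE x in M. ?m x \<le> ennreal (sqrt (g x * h x)))"
  proof
    assume "AE x in M. ?m x \<le> ennreal (sqrt (g x * h x))"
    then have "AE x in M. g x = h x"
      by eventually_elim (use nonneg sqrt_mult_less_mean in \<open>force simp: ennreal_le_iff\<close>)
    with differ show False ..
  qed
  moreover have "(\<integral>\<^sup>+ x. sqrt (g x * h x) \<partial>M) \<noteq> \<infinity>"
    using nn_integral_mono_AE[OF le] m1 by (auto simp: top_unique)
  ultimately have "(\<integral>\<^sup>+ x. sqrt (g x * h x) \<partial>M) < (\<integral>\<^sup>+ x. ?m x \<partial>M)"
    using le by (intro nn_integral_less) auto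
  then show ?thesis using m1 by simp
qed

lemma min_le_sqrt_mult:
  fixes x :: ennreal
  assumes "0 \<le> c"
  shows "min (ennreal c) (x\<^sup>2) \<le> ennreal (sqrt c) * x"
proof (cases "x \<le> ennreal (sqrt c)")
  case True
  then have "x\<^sup>2 \<le> ennreal (sqrt c) * x" by (simp add: power2_eq_square mult_right_mono)
  then show ?thesis by (simp add: min.coboundedI2)
next
  case False
  then have "ennreal (sqrt c) * ennreal (sqrt c) \<le> ennreal (sqrt c) * x" by (simp add: mult_left_mono)
  moreover have "ennreal (sqrt c) * ennreal (sqrt c) = ennreal c"
    using assms by (simp add: ennreal_mult[symmetric])
  ultimately show ?thesis by (simp add: min.coboundedI1)
qed

lemma min_1_nn_integral_pmf_le:
  fixes p :: "'a pmf" and X :: "'a \<Rightarrow> ennreal"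
  shows "min 1 (\<integral>\<^sup>+ v. X v \<partial>p) \<le> (\<integral>\<^sup>+ v. min (ennreal (1 / pmf p v)) (X v) \<partial>p)"
proof (cases "\<exists>v\<in>set_pmf p. ennreal (1 / pmf p v) \<le> X v")
  case True
  then obtain v where v: "v \<in> set_pmf p" "ennreal (1 / pmf p v) \<le> X v" by blast
  then have "1 = (\<integral>\<^sup>+ w. ennreal (1 / pmf p v) * indicator {v} w \<partial>p)"
    by (simp add: emeasure_pmf_single ennreal_mult[symmetric] set_pmf_iff)
  also have "\<dots> \<le> (\<integral>\<^sup>+ v. min (ennreal (1 / pmf p v)) (X v) \<partial>p)"
    using v by (intro nn_integral_mono) (auto split: split_indicator)
  finally show ?thesis by (simp add: min.coboundedI1)
next
  case False
  then have "(\<integral>\<^sup>+ v. min (ennreal (1 / pmf p v)) (X v) \<partial>p) = (\<integral>\<^sup>+ v. X v \<partial>p)"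
    by (intro nn_integral_cong_AE) (auto simp: AE_measure_pmf_iff min_def)
  then show ?thesis by (simp add: min.coboundedI2)
qed

lemma nn_integral_min_square_le:
  fixes X :: "'a \<Rightarrow> ennreal"
  assumes [measurable]: "X \<in> borel_measurable M"
    and square: "(\<integral>\<^sup>+ x. (X x)\<^sup>2 \<partial>M) \<le> 1" and "0 \<le> c"
  shows "(\<integral>\<^sup>+ x. min (ennreal c) ((X x)\<^sup>2) \<partial>M) \<le> min 1 (ennreal (sqrt c) * (\<integral>\<^sup>+ x. X x \<partial>M))"
proof -
  have "(\<integral>\<^sup>+ x. min (ennreal c) ((X x)\<^sup>2) \<partial>M) \<le> (\<integral>\<^sup>+ x. (X x)\<^sup>2 \<partial>M)"
    by (intro nn_integral_mono) simp
  also have "\<dots> \<le> 1" by (rule square)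
  finally have "(\<integral>\<^sup>+ x. min (ennreal c) ((X x)\<^sup>2) \<partial>M) \<le> 1" .
  moreover have "(\<integral>\<^sup>+ x. min (ennreal c) ((X x)\<^sup>2) \<partial>M) \<le> (\<integral>\<^sup>+ x. ennreal (sqrt c) * X x \<partial>M)"
    using \<open>0 \<le> c\<close> by (intro nn_integral_mono min_le_sqrt_mult)
  ultimately show ?thesis
    by (simp add: nn_integral_cmult)
qed

lemma prob_space_restrict_set_pmf: "prob_space (restrict_space (measure_pmf p) (set_pmf p))"
  by (intro prob_space_restrict_space measure_pmf.emeasure_eq_1_AE) (auto simp: AE_measure_pmf_iff)

lemma nn_integral_restrict_set_pmf:
  "(\<integral>\<^sup>+ v. G v \<partial>restrict_space (measure_pmf p) (set_pmf p)) = (\<integral>\<^sup>+ v. G v \<partial>p)"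
  by (subst nn_integral_restrict_space)
     (auto intro!: nn_integral_cong_AE simp: AE_measure_pmf_iff)

lemma borel_measurable_nn_integral_pmf:
  fixes G :: "'b \<Rightarrow> 'a \<Rightarrow> ennreal"
  assumes "\<And>v. v \<in> set_pmf p \<Longrightarrow> G v \<in> borel_measurable M"
  shows "(\<lambda>x. \<integral>\<^sup>+ v. G v x \<partial>p) \<in> borel_measurable M"
proof -
  interpret R: prob_space "restrict_space (measure_pmf p) (set_pmf p)"
    by (rule prob_space_restrict_set_pmf)
  have "(\<lambda>(x, v). G v x) \<in> borel_measurable (M \<Otimes>\<^sub>M restrict_space (measure_pmf p) (set_pmf p))"
    using assms by (intro measurable_pair_restrict_pmf2) auto
  then show ?thesis
    unfolding nn_integral_restrict_set_pmf[symmetric] by (rule R.borel_measurable_nn_integral)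
qed

lemma borel_measurable_integral_pmf:
  fixes G :: "'b \<Rightarrow> 'a \<Rightarrow> real"
  assumes "\<And>v. v \<in> set_pmf p \<Longrightarrow> G v \<in> borel_measurable M"
  shows "(\<lambda>x. \<integral>v. G v x \<partial>p) \<in> borel_measurable M"
proof -
  interpret R: prob_space "restrict_space (measure_pmf p) (set_pmf p)"
    by (rule prob_space_restrict_set_pmf)
  have "(\<lambda>(x, v). G v x) \<in> borel_measurable (M \<Otimes>\<^sub>M restrict_space (measure_pmf p) (set_pmf p))"
    using assms by (intro measurable_pair_restrict_pmf2) auto
  then have "(\<lambda>x. \<integral>v. G v x \<partial>restrict_space (measure_pmf p) (set_pmf p)) \<in> borel_measurable M"
    by (rule R.borel_measurable_lebesgue_integral)
  then show ?thesis by (simp add: integral_pmf_restrict)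
qed

lemma nn_integral_pmf_swap:
  fixes G :: "'b \<Rightarrow> 'a \<Rightarrow> ennreal"
  assumes "sigma_finite_measure M" and "\<And>v. v \<in> set_pmf p \<Longrightarrow> G v \<in> borel_measurable M"
  shows "(\<integral>\<^sup>+ x. \<integral>\<^sup>+ v. G v x \<partial>p \<partial>M) = (\<integral>\<^sup>+ v. \<integral>\<^sup>+ x. G v x \<partial>M \<partial>p)"
proof -
  let ?R = "restrict_space (measure_pmf p) (set_pmf p)"
  interpret R: prob_space ?R by (rule prob_space_restrict_set_pmf)
  interpret MR: pair_sigma_finite M ?R
    by (intro pair_sigma_finite.intro assms(1) R.sigma_finite_measure_axioms)
  have "(\<lambda>(x, v). G v x) \<in> borel_measurable (M \<Otimes>\<^sub>M ?R)"
    using assms by (intro measurable_pair_restrict_pmf2) auto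
  from MR.Fubini[OF this] show ?thesis
    by (simp add: nn_integral_restrict_set_pmf)
qed

lemma nn_integral_min_1_mixture_tendsto_0:
  fixes Lam :: "'b \<Rightarrow> nat \<Rightarrow> 'a \<Rightarrow> ennreal"
  assumes P: "prob_space P"
    and Lam_measurable[measurable]: "\<And>v t. v \<in> set_pmf p \<Longrightarrow> Lam v t \<in> borel_measurable P"
    and square: "\<And>v t. v \<in> set_pmf p \<Longrightarrow> (\<integral>\<^sup>+ x. (Lam v t x)\<^sup>2 \<partial>P) \<le> 1"
    and mean: "\<And>v. v \<in> set_pmf p \<Longrightarrow> (\<lambda>t. \<integral>\<^sup>+ x. Lam v t x \<partial>P) \<longlonglongrightarrow> 0"
  shows "(\<lambda>t. \<integral>\<^sup>+ x. min 1 (\<integral>\<^sup>+ v. (Lam v t x)\<^sup>2 \<partial>p) \<partial>P) \<longlonglongrightarrow> 0"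
proof -
  interpret P: prob_space P by (rule P)
  let ?c = "\<lambda>v. 1 / pmf p v"
  let ?B = "\<lambda>t v. min 1 (ennreal (sqrt (?c v)) * (\<integral>\<^sup>+ x. Lam v t x \<partial>P))"
  have bound: "(\<integral>\<^sup>+ x. min (ennreal (?c v)) ((Lam v t x)\<^sup>2) \<partial>P) \<le> ?B t v"
    if "v \<in> set_pmf p" for v t
    using that by (intro nn_integral_min_square_le[OF Lam_measurable square]) simp_all
  have "(\<integral>\<^sup>+ x. min 1 (\<integral>\<^sup>+ v. (Lam v t x)\<^sup>2 \<partial>p) \<partial>P)
      \<le> (\<integral>\<^sup>+ x. \<integral>\<^sup>+ v. min (ennreal (?c v)) ((Lam v t x)\<^sup>2) \<partial>p \<partial>P)" for t
    by (intro nn_integral_mono min_1_nn_integral_pmf_le)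
  also have "(\<integral>\<^sup>+ x. \<integral>\<^sup>+ v. min (ennreal (?c v)) ((Lam v t x)\<^sup>2) \<partial>p \<partial>P)
      = (\<integral>\<^sup>+ v. \<integral>\<^sup>+ x. min (ennreal (?c v)) ((Lam v t x)\<^sup>2) \<partial>P \<partial>p)" for t
    using P.sigma_finite_measure_axioms by (intro nn_integral_pmf_swap) measurable
  also have "(\<integral>\<^sup>+ v. \<integral>\<^sup>+ x. min (ennreal (?c v)) ((Lam v t x)\<^sup>2) \<partial>P \<partial>p) \<le> (\<integral>\<^sup>+ v. ?B t v \<partial>p)" for t
    using bound by (intro nn_integral_mono_AE) (simp add: AE_measure_pmf_iff)
  finally have le: "(\<integral>\<^sup>+ x. min 1 (\<integral>\<^sup>+ v. (Lam v t x)\<^sup>2 \<partial>p) \<partial>P) \<le> (\<integral>\<^sup>+ v. ?B t v \<partial>p)" for t .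
  have "(\<lambda>t. \<integral>\<^sup>+ v. ?B t v \<partial>p) \<longlonglongrightarrow> (\<integral>\<^sup>+ v. 0 \<partial>p)"
  proof (rule nn_integral_dominated_convergence[where w="\<lambda>_. 1"])
    have "(\<lambda>t. ?B t v) \<longlonglongrightarrow> min 1 (ennreal (sqrt (?c v)) * 0)" if "v \<in> set_pmf p" for v
      by (intro tendsto_min tendsto_const ennreal_tendsto_cmult mean that) simp
    then show "AE v in p. (\<lambda>t. ?B t v) \<longlonglongrightarrow> 0"
      by (simp add: AE_measure_pmf_iff)
  qed (simp_all add: measure_pmf.emeasure_space_1)
  then have lim: "(\<lambda>t. \<integral>\<^sup>+ v. ?B t v \<partial>p) \<longlonglongrightarrow> 0" by simp
  show ?thesis
  proof (rule tendsto_sandwich[OF _ _ tendsto_const lim])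
    show "\<forall>\<^sub>F t in sequentially. 0 \<le> (\<integral>\<^sup>+ x. min 1 (\<integral>\<^sup>+ v. (Lam v t x)\<^sup>2 \<partial>p) \<partial>P)"
      by simp
    show "\<forall>\<^sub>F t in sequentially. (\<integral>\<^sup>+ x. min 1 (\<integral>\<^sup>+ v. (Lam v t x)\<^sup>2 \<partial>p) \<partial>P) \<le> (\<integral>\<^sup>+ v. ?B t v \<partial>p)"
      using le by (intro always_eventually allI)
  qed
qed

lemma (in prob_space) tendsto_prob_ge_if_nn_integral_min_1_tendsto_0:
  fixes Y :: "nat \<Rightarrow> 'a \<Rightarrow> ennreal"
  assumes [measurable]: "\<And>t. Y t \<in> borel_measurable M"
    and lim: "(\<lambda>t. \<integral>\<^sup>+ x. min 1 (Y t x) \<partial>M) \<longlonglongrightarrow> 0" and "0 < c"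
  shows "(\<lambda>t. prob {x \<in> space M. ennreal c \<le> Y t x}) \<longlonglongrightarrow> 0"
proof -
  let ?A = "\<lambda>t. {x \<in> space M. ennreal c \<le> Y t x}"
  let ?I = "\<lambda>t. \<integral>\<^sup>+ x. min 1 (Y t x) \<partial>M"
  define b where "b = min 1 c"
  have b: "0 < b" using \<open>0 < c\<close> by (simp add: b_def)
  have "ennreal (b * prob (?A t)) \<le> ?I t" for t
  proof -
    have "ennreal (b * prob (?A t)) = ennreal b * emeasure M (?A t)"
      using b by (simp add: emeasure_eq_measure ennreal_mult)
    also have "\<dots> = (\<integral>\<^sup>+ x. ennreal b * indicator (?A t) x \<partial>M)"
      by (rule nn_integral_cmult_indicator[symmetric]) measurable
    also have "\<dots> \<le> ?I t"
      by (intro nn_integral_mono)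
        (auto simp: b_def split: split_indicator intro: order_trans[OF ennreal_leI[of "min 1 c" c]])
    finally show ?thesis .
  qed
  moreover have "?I t \<le> 1" for t
    using nn_integral_mono[of M "\<lambda>x. min 1 (Y t x)" "\<lambda>_. 1"] by (simp add: emeasure_space_1)
  ultimately have le: "b * prob (?A t) \<le> enn2real (?I t)" for t
    using b by (metis enn2real_ennreal enn2real_mono ennreal_one_less_top le_less_trans
        measure_nonneg mult_nonneg_nonneg less_imp_le)
  have "(\<lambda>t. enn2real (?I t) / b) \<longlonglongrightarrow> enn2real 0 / b"
    using b lim by (intro tendsto_divide tendsto_const tendsto_enn2real) simp_all
  then have lim': "(\<lambda>t. enn2real (?I t) / b) \<longlonglongrightarrow> 0" by simp
  show ?thesis
  proof (rule tendsto_sandwich[OF _ _ tendsto_const lim'])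
    show "\<forall>\<^sub>F t in sequentially. 0 \<le> prob (?A t)" by simp
    show "\<forall>\<^sub>F t in sequentially. prob (?A t) \<le> enn2real (?I t) / b"
      using le b by (intro always_eventually allI) (simp add: field_simps mult.commute)
  qed
qed

lemma wbel_deviation_le:
  fixes mu0 :: "real pmf" and L :: "real \<Rightarrow> real"
  assumes u: "u \<in> set_pmf mu0" and Lu: "0 < L u" and L: "\<And>v. v \<in> set_pmf mu0 \<Longrightarrow> 0 \<le> L v"
    and dev: "e < \<bar>wbel mu0 L u - 1\<bar>"
  shows "ennreal (e * pmf mu0 u) \<le> (\<integral>\<^sup>+ v. indicator (-{u}) v * ennreal (L v / L u) \<partial>mu0)"
    (is "_ \<le> ?Y")
proof (cases "?Y = \<top>")
  case False
  define y where "y = enn2real ?Y"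
  have Y: "?Y = ennreal y" and y: "0 \<le> y"
    using False by (simp_all add: y_def ennreal_enn2real_if)
  have p: "0 < pmf mu0 u" using u by (simp add: pmf_positive)
  have "(\<integral>\<^sup>+ v. ennreal (L v) \<partial>mu0)
      = (\<integral>\<^sup>+ v. ennreal (L u) * (indicator {u} v + indicator (-{u}) v * ennreal (L v / L u)) \<partial>mu0)"
    using Lu L by (intro nn_integral_cong_AE)
      (auto simp: AE_measure_pmf_iff ennreal_mult[symmetric] split: split_indicator)
  also have "\<dots> = ennreal (L u * (pmf mu0 u + y))"
    using Lu y Y by (simp add: nn_integral_cmult nn_integral_add emeasure_pmf_single
        ennreal_mult[symmetric] ennreal_plus[symmetric] del: ennreal_plus)
  finally have "(\<integral>v. L v \<partial>mu0) = L u * (pmf mu0 u + y)"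
    using Lu y L p by (subst (asm) nn_integral_eq_integrable)
      (auto simp: AE_measure_pmf_iff)
  then have "wbel mu0 L u = pmf mu0 u / (pmf mu0 u + y)"
    using Lu by (simp add: wbel_def)
  moreover have "\<bar>pmf mu0 u / (pmf mu0 u + y) - 1\<bar> = y / (pmf mu0 u + y)"
    using p y by (simp add: field_simps)
  ultimately have "e < y / (pmf mu0 u + y)" using dev by simp
  also have "\<dots> \<le> y / pmf mu0 u"
    using p y by (intro divide_left_mono) auto
  finally show ?thesis
    unfolding Y by (intro ennreal_leI) (use p in \<open>simp add: field_simps\<close>)
qed simp

lemma ennreal_power_tendsto_0:
  fixes a :: ennreal
  assumes "a < 1"
  shows "(\<lambda>n. a ^ n) \<longlonglongrightarrow> 0"
proof -
  obtain r where r: "a = ennreal r" "0 \<le> r" "r < 1"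
    using assms by (cases a) (auto simp: ennreal_less_iff)
  have "(\<lambda>n. ennreal (r ^ n)) \<longlonglongrightarrow> ennreal 0"
    using r by (intro tendsto_ennrealI LIMSEQ_realpow_zero)
  then show ?thesis using r by (simp add: ennreal_power)
qed

lemma ennreal_mix_less_1:
  fixes a :: ennreal
  assumes "0 \<le> q" "q < 1" "a < 1"
  shows "ennreal q + ennreal (1 - q) * a < 1"
proof -
  obtain r where r: "a = ennreal r" "0 \<le> r" "r < 1"
    using assms(3) by (cases a) (auto simp: ennreal_less_iff)
  have "(1 - q) * r < 1 - q" using assms(2) r by simp
  then have "ennreal (q + (1 - q) * r) < ennreal 1"
    by (intro ennreal_lessI) auto
  then show ?thesis
    using assms r by (simp add: ennreal_mult[symmetric] ennreal_plus[symmetric] del: ennreal_plus)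
qed

lemma ennreal_sqrt_square: "0 \<le> x \<Longrightarrow> (ennreal (sqrt x))\<^sup>2 = ennreal x"
  by (simp add: ennreal_power)

lemma mult_sqrt_divide: "0 \<le> a \<Longrightarrow> 0 < b \<Longrightarrow> b * sqrt (a / b) = sqrt (a * b)"
  by (metis less_imp_le nonzero_eq_divide_eq real_sqrt_abs2 real_sqrt_mult abs_of_nonneg
      order_less_irrefl times_divide_eq_left mult.commute)

lemma learnsD:
  assumes "learns P Om B" and "w \<in> Om"
  shows "(\<lambda>xs. B xs t w) \<in> borel_measurable (P w)"
    and "\<forall>e>0. (\<lambda>t. measure (P w) {xs \<in> space (P w). \<bar>B xs t w - 1\<bar> > e}) \<longlonglongrightarrow> 0"
  using assms unfolding learns_def by simp_all

locale signal_structure =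
  fixes q :: real and S :: "real set" and f :: "real \<Rightarrow> real \<Rightarrow> real" and Om :: "real set"
  assumes countable_Om: "countable Om"
    and q_pos: "0 < q" and q_less_1: "q < 1"
    and S_sets: "S \<in> sets lborel"
    and f_measurable[measurable]: "w \<in> Om \<Longrightarrow> (\<lambda>s. f s w) \<in> borel_measurable borel"
    and f_pos: "w \<in> Om \<Longrightarrow> s \<in> S \<Longrightarrow> 0 < f s w"
    and f_integral: "w \<in> Om \<Longrightarrow> (\<integral>\<^sup>+ s. ennreal (f s w * indicator S s) \<partial>lborel) = 1"
begin

lemma S_borel[measurable]: "S \<in> sets borel"
  using S_sets by simp

lemma f_nonzero: "w \<in> Om \<Longrightarrow> s \<in> S \<Longrightarrow> f s w \<noteq> 0"
  using f_pos by force

lemma sets_sig[measurable_cong]: "sets (sig S f w) = sets borel"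
  by (simp add: sig_def)

lemma sets_date_measure[measurable_cong]:
  "sets (date_measure q S f w) = sets (count_space UNIV \<Otimes>\<^sub>M borel)"
  unfolding date_measure_def by (intro sets_pair_measure_cong) (auto simp: sets_sig)

lemma measurable_noise_flag[measurable]:
  "(\<lambda>x::outcome. fst (fst x)) \<in> measurable (count_space UNIV \<Otimes>\<^sub>M borel) (count_space UNIV)"
  by (rule measurable_compose[OF measurable_fst]) simp

lemma prob_space_sig: "w \<in> Om \<Longrightarrow> prob_space (sig S f w)"
  by (rule prob_spaceI) (simp add: sig_def emeasure_density f_integral)

lemma prob_space_date_measure: "w \<in> Om \<Longrightarrow> prob_space (date_measure q S f w)"
  unfolding date_measure_def by (intro prob_space_pair prob_space_sig prob_space_measure_pmf)

lemma prob_space_path_measure: "w \<in> Om \<Longrightarrow> prob_space (path_measure q S f w)"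
  unfolding path_measure_def by (intro prob_space_PiM prob_space_date_measure)

lemma sig_eq_if_indistinguishable:
  assumes w: "w1 \<in> Om" "w2 \<in> Om"
    and indist: "\<not> (\<exists>A. A \<subseteq> S \<and> A \<in> sets lborel \<and> emeasure lborel A > 0 \<and> (\<forall>s\<in>A. f s w1 \<noteq> f s w2))"
  shows "sig S f w1 = sig S f w2"
proof -
  let ?A = "{s\<in>S. f s w1 \<noteq> f s w2}"
  have "?A \<in> sets lborel" using w by simp
  with indist have "?A \<in> null_sets lborel"
    by (auto simp: null_sets_def zero_less_iff_neq_zero)
  then have "AE s in lborel. s \<notin> ?A"
    by (rule AE_not_in)
  then show ?thesis
    unfolding sig_def using w
    by (intro density_cong) (auto elim!: eventually_mono split: split_indicator)
qed

lemma path_measure_eq_if_not_pairwise_informative: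
  assumes "\<not> pairwise_informative S f Om"
  obtains w1 w2 where "w1 \<in> Om" "w2 \<in> Om" "w1 \<noteq> w2"
    and "path_measure q S f w1 = path_measure q S f w2"
proof -
  obtain w1 w2 where w: "w1 \<in> Om" "w2 \<in> Om" "w1 \<noteq> w2"
    and "\<not> (\<exists>A. A \<subseteq> S \<and> A \<in> sets lborel \<and> emeasure lborel A > 0 \<and> (\<forall>s\<in>A. f s w1 \<noteq> f s w2))"
    using assms unfolding pairwise_informative_def by meson
  then have "sig S f w1 = sig S f w2"
    by (intro sig_eq_if_indistinguishable)
  then have "path_measure q S f w1 = path_measure q S f w2"
    unfolding path_measure_def date_measure_def by simp
  with w that show thesis by blast
qed

lemma AE_signal_in_S:
  assumes u: "u \<in> Om"
  shows "AE x in date_measure q S f u. snd x \<in> S"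
proof -
  let ?N = "measure_pmf (pair_pmf (bernoulli_pmf q) (pmf_of_set {Buy, Sell, NoTrade}))"
  interpret Sg: prob_space "sig S f u" by (rule prob_space_sig[OF u])
  interpret pair_sigma_finite ?N "sig S f u" by unfold_locales
  have "AE s in sig S f u. s \<in> S"
    unfolding sig_def using u by (subst AE_density) (auto split: split_indicator)
  then show ?thesis
    unfolding date_measure_def by (intro AE_pair_measure) simp_all
qed

lemma AE_signals_in_S:
  assumes u: "u \<in> Om"
  shows "AE xs in path_measure q S f u. \<forall>i. snd (xs i) \<in> S"
  unfolding path_measure_def AE_all_countable
  by (intro allI AE_PiM_component[OF prob_space_date_measure[OF u] _ AE_signal_in_S[OF u]]) simp

lemma nn_integral_date_measure:
  assumes u: "u \<in> Om" and [measurable]: "k \<in> borel_measurable borel"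
  shows "(\<integral>\<^sup>+ x. (if fst (fst x) then 1 else k (snd x)) \<partial>date_measure q S f u)
      = ennreal q + ennreal (1 - q) * (\<integral>\<^sup>+ s. k s \<partial>sig S f u)"
proof -
  interpret Sg: prob_space "sig S f u" by (rule prob_space_sig[OF u])
  let ?N = "measure_pmf (pair_pmf (bernoulli_pmf q) (pmf_of_set {Buy, Sell, NoTrade}))"
  have meas: "(\<lambda>x. if fst (fst x) then 1 else k (snd x)) \<in> borel_measurable (?N \<Otimes>\<^sub>M sig S f u)"
    by measurable
  have "(\<integral>\<^sup>+ x. (if fst (fst x) then 1 else k (snd x)) \<partial>date_measure q S f u)
      = (\<integral>\<^sup>+ a. (if fst a then 1 else \<integral>\<^sup>+ s. k s \<partial>sig S f u) \<partial>?N)"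
    unfolding date_measure_def Sg.nn_integral_fst[OF meas, symmetric]
    by (intro nn_integral_cong) (simp add: Sg.emeasure_space_1)
  also have "\<dots> = (\<integral>\<^sup>+ b. (if b then 1 else \<integral>\<^sup>+ s. k s \<partial>sig S f u) \<partial>bernoulli_pmf q)"
    by (subst nn_integral_pair_pmf') (simp add: measure_pmf.emeasure_space_1)
  also have "\<dots> = ennreal q + ennreal (1 - q) * (\<integral>\<^sup>+ s. k s \<partial>sig S f u)"
    using q_pos q_less_1 by (simp add: mult.commute)
  finally show ?thesis .
qed

section \<open>Private signals\<close>

lemma act_prob_pos_le_1:
  assumes "w \<in> Om"
  shows "0 < act_prob q S f mu0 L a b c w" "act_prob q S f mu0 L a b c w \<le> 1"
proof -
  interpret prob_space "sig S f w" by (rule prob_space_sig[OF assms])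
  let ?m = "measure (sig S f w) {s. inf_act mu0 f L a b s = c}"
  have "0 \<le> (1 - q) * ?m" "(1 - q) * ?m \<le> 1 - q"
    using q_pos q_less_1 by (auto intro: mult_left_le)
  then show "0 < act_prob q S f mu0 L a b c w" "act_prob q S f mu0 L a b c w \<le> 1"
    unfolding act_prob_def using q_pos by auto
qed

lemma priv_lik_pos_le_1:
  assumes "w \<in> Om"
  shows "0 < priv_lik q S f mu0 ask bid h w \<and> priv_lik q S f mu0 ask bid h w \<le> 1"
proof (induction h)
  case (Cons c h)
  then show ?case
    using act_prob_pos_le_1[OF assms, of mu0 "priv_lik q S f mu0 ask bid h" "ask h" "bid h" c]
    by (simp add: mult_le_one)
qed simp

lemma priv_belief_add_le_1:
  assumes mu0: "set_pmf mu0 = Om" and "w1 \<noteq> w2"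
  shows "priv_belief q S f mu0 ask bid xs t w1 + priv_belief q S f mu0 ask bid xs t w2 \<le> 1"
proof -
  let ?L = "priv_lik q S f mu0 ask bid (priv_hist q S f mu0 ask bid xs t)"
  have L: "0 \<le> ?L v \<and> ?L v \<le> 1" if "v \<in> set_pmf mu0" for v
    using priv_lik_pos_le_1 mu0 that by (auto intro: less_imp_le)
  then have "integrable mu0 ?L"
    by (intro measure_pmf.integrable_const_bound[where B=1]) (auto simp: AE_measure_pmf_iff)
  with L \<open>w1 \<noteq> w2\<close> show ?thesis
    unfolding priv_belief_def by (intro wbel_add_le_1) auto
qed

theorem private_learning_imp_pairwise_informative:
  assumes "private_learning q S f Om"
  shows "pairwise_informative S f Om"
proof (rule ccontr)
  assume "\<not> pairwise_informative S f Om"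
  then obtain w1 w2 where w: "w1 \<in> Om" "w2 \<in> Om" "w1 \<noteq> w2"
    and same_path: "path_measure q S f w1 = path_measure q S f w2"
    by (rule path_measure_eq_if_not_pairwise_informative)
  obtain mu0 :: "real pmf" where mu0: "set_pmf mu0 = Om"
    using ex_pmf_set_pmf_eq[of Om] countable_Om w(1) by blast
  have "\<exists>ask bid. zero_profit q S f mu0 ask bid \<and>
      learns (path_measure q S f) Om (priv_belief q S f mu0 ask bid)"
    using assms mu0 unfolding private_learning_def by metis
  then obtain ask bid where lr: "learns (path_measure q S f) Om (priv_belief q S f mu0 ask bid)"
    by metis
  let ?B = "priv_belief q S f mu0 ask bid"
  note conv1 = learnsD[OF lr w(1)] and conv2 = learnsD[OF lr w(2), folded same_path]
  interpret prob_space "path_measure q S f w1"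
    by (rule prob_space_path_measure[OF w(1)])
  show False
    by (rule not_both_tendsto_1_in_probability[where X="\<lambda>t xs. ?B xs t w1" and Y="\<lambda>t xs. ?B xs t w2",
          OF conv1(1) conv2(1) _ conv1(2) conv2(2)])
      (rule priv_belief_add_le_1[OF mu0 w(3)])
qed

section \<open>Public signals\<close>

definition sqrt_lr :: "real \<Rightarrow> real \<Rightarrow> outcome \<Rightarrow> ennreal" where
  "sqrt_lr u v x = (if fst (fst x) then 1 else ennreal (sqrt (f (snd x) v / f (snd x) u)))"

definition lr_root :: "real \<Rightarrow> real \<Rightarrow> nat \<Rightarrow> (nat \<Rightarrow> outcome) \<Rightarrow> ennreal" where
  "lr_root u v t xs = (\<Prod>i<t. sqrt_lr u v (xs i))"

lemma sqrt_lr_measurable[measurable]: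
  "u \<in> Om \<Longrightarrow> v \<in> Om \<Longrightarrow> sqrt_lr u v \<in> borel_measurable (date_measure q S f w)"
  unfolding sqrt_lr_def by measurable

lemma lr_root_measurable[measurable]:
  "u \<in> Om \<Longrightarrow> v \<in> Om \<Longrightarrow> lr_root u v t \<in> borel_measurable (path_measure q S f w)"
  unfolding lr_root_def path_measure_def by measurable

lemma nn_integral_lr_root_power:
  assumes "u \<in> Om" "v \<in> Om"
  shows "(\<integral>\<^sup>+ xs. (lr_root u v t xs) ^ n \<partial>path_measure q S f u)
      = (\<integral>\<^sup>+ x. (sqrt_lr u v x) ^ n \<partial>date_measure q S f u) ^ t"
proof -
  have "(\<integral>\<^sup>+ xs. (lr_root u v t xs) ^ n \<partial>path_measure q S f u)
      = (\<integral>\<^sup>+ xs. (\<Prod>i<t. (sqrt_lr u v (xs i)) ^ n) \<partial>PiM UNIV (\<lambda>_. date_measure q S f u))"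
    by (simp add: lr_root_def path_measure_def prod_power_distrib)
  also have "\<dots> = (\<integral>\<^sup>+ x. (sqrt_lr u v x) ^ n \<partial>date_measure q S f u) ^ t"
    using assms
    by (intro nn_integral_PiM_prod_iid[where phi="\<lambda>x. (sqrt_lr u v x) ^ n"] prob_space_date_measure)
      measurable
  finally show ?thesis .
qed

lemma nn_integral_sqrt_lr_square:
  assumes u: "u \<in> Om" and v: "v \<in> Om"
  shows "(\<integral>\<^sup>+ x. (sqrt_lr u v x)\<^sup>2 \<partial>date_measure q S f u) = 1"
proof -
  have "(\<integral>\<^sup>+ x. (sqrt_lr u v x)\<^sup>2 \<partial>date_measure q S f u)
      = ennreal q + ennreal (1 - q) * (\<integral>\<^sup>+ s. (ennreal (sqrt (f s v / f s u)))\<^sup>2 \<partial>sig S f u)"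
    unfolding sqrt_lr_def using u v
    by (subst nn_integral_date_measure[symmetric]) (auto intro!: nn_integral_cong)
  also have "(\<integral>\<^sup>+ s. (ennreal (sqrt (f s v / f s u)))\<^sup>2 \<partial>sig S f u)
      = (\<integral>\<^sup>+ s. ennreal (f s v * indicator S s) \<partial>lborel)"
    unfolding sig_def using u v
    by (subst nn_integral_density) (auto intro!: nn_integral_cong
        simp: ennreal_sqrt_square f_pos f_nonzero less_imp_le ennreal_mult[symmetric] split: split_indicator)
  finally show ?thesis
    using q_pos q_less_1 v by (simp add: f_integral ennreal_plus[symmetric] del: ennreal_plus)
qed

lemma densities_differ_if_pairwise_informative:
  assumes "pairwise_informative S f Om" and "u \<in> Om" "v \<in> Om" "v \<noteq> u"
  shows "\<not> (AE s in lborel. f s v * indicator S s = f s u * indicator S s)"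
proof
  obtain A where A: "A \<subseteq> S" "A \<in> sets lborel" "emeasure lborel A > 0" "\<forall>s\<in>A. f s v \<noteq> f s u"
    using assms unfolding pairwise_informative_def by metis
  assume "AE s in lborel. f s v * indicator S s = f s u * indicator S s"
  then have "AE s in lborel. s \<notin> A"
    by eventually_elim (use A in \<open>auto split: split_indicator\<close>)
  then have "A \<in> null_sets lborel" using A(2) by (simp add: AE_iff_null_sets)
  then show False using A(3) by (simp add: null_sets_def)
qed

lemma nn_integral_sqrt_lr_less_1:
  assumes pw: "pairwise_informative S f Om" and u: "u \<in> Om" and v: "v \<in> Om" "v \<noteq> u"
  shows "(\<integral>\<^sup>+ x. sqrt_lr u v x \<partial>date_measure q S f u) < 1"
proof -
  let ?g = "\<lambda>s. f s v * indicator S s" and ?h = "\<lambda>s. f s u * indicator S s"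
  have nonneg: "0 \<le> ?g s" "0 \<le> ?h s" for s
    using u v f_pos by (auto split: split_indicator intro: less_imp_le)
  have "(\<integral>\<^sup>+ s. ennreal (sqrt (f s v / f s u)) \<partial>sig S f u) = (\<integral>\<^sup>+ s. sqrt (?g s * ?h s) \<partial>lborel)"
    unfolding sig_def using u v
    by (subst nn_integral_density) (auto intro!: nn_integral_cong
        simp: f_pos less_imp_le mult_sqrt_divide ennreal_mult[symmetric] split: split_indicator)
  also have "\<dots> < 1"
    using u v by (intro bhattacharyya_less_1[OF _ _ nonneg f_integral f_integral
          densities_differ_if_pairwise_informative[OF pw u v]]) simp_all
  finally have rho: "(\<integral>\<^sup>+ s. ennreal (sqrt (f s v / f s u)) \<partial>sig S f u) < 1" .
  have "(\<integral>\<^sup>+ x. sqrt_lr u v x \<partial>date_measure q S f u)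
      = ennreal q + ennreal (1 - q) * (\<integral>\<^sup>+ s. ennreal (sqrt (f s v / f s u)) \<partial>sig S f u)"
    unfolding sqrt_lr_def using u v by (intro nn_integral_date_measure) measurable
  also have "\<dots> < 1"
    using rho q_pos q_less_1 by (intro ennreal_mix_less_1) auto
  finally show ?thesis .
qed

lemma lr_root_tendsto_0:
  assumes "pairwise_informative S f Om" and "u \<in> Om" "v \<in> Om" "v \<noteq> u"
  shows "(\<lambda>t. \<integral>\<^sup>+ xs. lr_root u v t xs \<partial>path_measure q S f u) \<longlonglongrightarrow> 0"
  using nn_integral_lr_root_power[of u v _ 1] assms
  by (simp add: ennreal_power_tendsto_0 nn_integral_sqrt_lr_less_1)

lemma pub_lik_pos: "\<forall>i. snd (xs i) \<in> S \<Longrightarrow> v \<in> Om \<Longrightarrow> 0 < pub_lik f xs t v"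
  unfolding pub_lik_def by (intro prod_pos) (auto simp: f_pos)

lemma pub_lik_ratio:
  assumes S: "\<forall>i. snd (xs i) \<in> S" and u: "u \<in> Om" and v: "v \<in> Om"
  shows "ennreal (pub_lik f xs t v / pub_lik f xs t u) = (lr_root u v t xs)\<^sup>2"
proof -
  let ?r = "\<lambda>i. (if fst (fst (xs i)) then 1 else f (snd (xs i)) v)
    / (if fst (fst (xs i)) then 1 else f (snd (xs i)) u)"
  have "ennreal (pub_lik f xs t v / pub_lik f xs t u) = ennreal (\<Prod>i<t. ?r i)"
    unfolding pub_lik_def by (simp add: prod_dividef)
  also have "\<dots> = (\<Prod>i<t. ennreal (?r i))"
    using S u v by (intro prod_ennreal[symmetric]) (auto simp: f_pos less_imp_le)
  also have "\<dots> = (\<Prod>i<t. (sqrt_lr u v (xs i))\<^sup>2)"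
    using S u v by (intro prod.cong) (auto simp: sqrt_lr_def ennreal_sqrt_square f_pos less_imp_le)
  finally show ?thesis by (simp add: lr_root_def prod_power_distrib)
qed

lemma borel_measurable_pub_lik[measurable]:
  "v \<in> Om \<Longrightarrow> (\<lambda>xs. pub_lik f xs t v) \<in> borel_measurable (path_measure q S f w)"
  unfolding pub_lik_def path_measure_def by measurable

lemma borel_measurable_pub_belief:
  assumes "set_pmf mu0 = Om" "u \<in> Om"
  shows "(\<lambda>xs. pub_belief mu0 f xs t u) \<in> borel_measurable (path_measure q S f w)"
proof -
  have [measurable]: "(\<lambda>xs. \<integral>v. pub_lik f xs t v \<partial>mu0) \<in> borel_measurable (path_measure q S f w)"
    using assms by (intro borel_measurable_integral_pmf) auto
  show ?thesis
    unfolding pub_belief_def wbel_def using assms by measurable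
qed

lemma pub_belief_deviation_le_odds:
  assumes mu0: "set_pmf mu0 = Om" and u: "u \<in> Om" and S: "\<forall>i. snd (xs i) \<in> S"
    and "e < \<bar>pub_belief mu0 f xs t u - 1\<bar>"
  shows "ennreal (e * pmf mu0 u) \<le> (\<integral>\<^sup>+ v. (if v = u then 0 else lr_root u v t xs)\<^sup>2 \<partial>mu0)"
proof -
  have "ennreal (e * pmf mu0 u)
      \<le> (\<integral>\<^sup>+ v. indicator (-{u}) v * ennreal (pub_lik f xs t v / pub_lik f xs t u) \<partial>mu0)"
    using assms unfolding pub_belief_def
    by (intro wbel_deviation_le) (auto simp: pub_lik_pos less_imp_le)
  also have "\<dots> = (\<integral>\<^sup>+ v. (if v = u then 0 else lr_root u v t xs)\<^sup>2 \<partial>mu0)"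
    using S u mu0 by (intro nn_integral_cong_AE) (auto simp: AE_measure_pmf_iff pub_lik_ratio)
  finally show ?thesis .
qed

lemma pub_belief_tendsto_1_in_probability:
  assumes pw: "pairwise_informative S f Om" and mu0: "set_pmf mu0 = Om" and u: "u \<in> Om"
    and "0 < e"
  shows "(\<lambda>t. measure (path_measure q S f u)
           {xs \<in> space (path_measure q S f u). \<bar>pub_belief mu0 f xs t u - 1\<bar> > e}) \<longlonglongrightarrow> 0"
proof -
  let ?P = "path_measure q S f u"
  interpret P: prob_space ?P by (rule prob_space_path_measure[OF u])
  define Lam :: "real \<Rightarrow> nat \<Rightarrow> (nat \<Rightarrow> outcome) \<Rightarrow> ennreal"
    where "Lam v t xs = (if v = u then 0 else lr_root u v t xs)" for v t xs
  define Y where "Y t xs = (\<integral>\<^sup>+ v. (Lam v t xs)\<^sup>2 \<partial>mu0)" for t xs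
  have [measurable]: "Lam v t \<in> borel_measurable ?P" if "v \<in> Om" for v t
    using that u unfolding Lam_def by measurable
  have [measurable]: "Y t \<in> borel_measurable ?P" for t
    unfolding Y_def using mu0 by (intro borel_measurable_nn_integral_pmf) measurable
  have "(\<lambda>t. \<integral>\<^sup>+ xs. min 1 (Y t xs) \<partial>?P) \<longlonglongrightarrow> 0"
    unfolding Y_def
  proof (rule nn_integral_min_1_mixture_tendsto_0[OF P.prob_space_axioms])
    fix v t assume "v \<in> set_pmf mu0"
    with mu0 u show "(\<integral>\<^sup>+ xs. (Lam v t xs)\<^sup>2 \<partial>?P) \<le> 1"
      by (cases "v = u") (simp_all add: Lam_def nn_integral_lr_root_power nn_integral_sqrt_lr_square)
  next
    fix v assume "v \<in> set_pmf mu0"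
    with pw mu0 u show "(\<lambda>t. \<integral>\<^sup>+ xs. Lam v t xs \<partial>?P) \<longlonglongrightarrow> 0"
      by (cases "v = u") (simp_all add: Lam_def lr_root_tendsto_0)
  qed (use mu0 in simp)
  then have Y_small: "(\<lambda>t. P.prob {xs \<in> space ?P. ennreal (e * pmf mu0 u) \<le> Y t xs}) \<longlonglongrightarrow> 0"
    using \<open>0 < e\<close> u mu0 by (intro P.tendsto_prob_ge_if_nn_integral_min_1_tendsto_0) (auto simp: pmf_positive)
  have deviation: "AE xs in ?P. \<bar>pub_belief mu0 f xs t u - 1\<bar> > e \<longrightarrow> ennreal (e * pmf mu0 u) \<le> Y t xs"
    for t
    using AE_signals_in_S[OF u]
    by eventually_elim (use mu0 u in \<open>simp add: Y_def Lam_def pub_belief_deviation_le_odds\<close>)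
  have "measure ?P {xs \<in> space ?P. \<bar>pub_belief mu0 f xs t u - 1\<bar> > e}
      \<le> P.prob {xs \<in> space ?P. ennreal (e * pmf mu0 u) \<le> Y t xs}" for t
  proof (rule P.finite_measure_mono_AE)
    show "AE xs in ?P. xs \<in> {xs \<in> space ?P. \<bar>pub_belief mu0 f xs t u - 1\<bar> > e}
        \<longrightarrow> xs \<in> {xs \<in> space ?P. ennreal (e * pmf mu0 u) \<le> Y t xs}"
      using deviation[of t] by eventually_elim auto
  qed measurable
  then show ?thesis
    by (intro tendsto_sandwich[OF _ _ tendsto_const Y_small] always_eventually) auto
qed

theorem pairwise_informative_imp_public_learning:
  assumes "pairwise_informative S f Om"
  shows "public_learning q S f Om"
  unfolding public_learning_def learns_def
  using borel_measurable_pub_belief pub_belief_tendsto_1_in_probability[OF assms] by blast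

end

theorem mainTheorem9:
  fixes Om S :: "real set" and f :: "real \<Rightarrow> real \<Rightarrow> real" and q :: real
  assumes "Om \<noteq> {}" and "countable Om" and "bounded Om"
    and "0 < q" and "q < 1"
    and "S \<in> sets lborel"
    and "\<forall>w\<in>Om. (\<lambda>s. f s w) \<in> borel_measurable lborel"
    and "\<forall>w\<in>Om. \<forall>s\<in>S. 0 < f s w"
    and "\<forall>w\<in>Om. (\<integral>\<^sup>+ s. ennreal (f s w * indicator S s) \<partial>lborel) = 1"
  shows "(private_learning q S f Om \<longrightarrow> public_learning q S f Om) \<and>
         (private_learning q S f Om \<longrightarrow> pairwise_informative S f Om)"
proof -
  interpret signal_structure q S f Om
    using assms by unfold_locales (auto simp: measurable_lborel1)
  show ?thesis
    using private_learning_imp_pairwise_informative pairwise_informative_imp_public_learning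
    by blast
qed

end
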